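(* Let $1\leq p<q$ be integers and let $G=\langle a,t\mid ta^pt^{-1}=a^q\rangle$ be the Baumslag--Solitar group $BS(p,q)$. Every element $x\in G$ can be written uniquely as $x=w(a,t)a^N$, where $N\in\mathbb Z$ and $w(a,t)$ is a freely reduced word belonging to $\{t,at,\ldots,a^{q-1}t,\,t^{-1},at^{-1},\ldots,a^{p-1}t^{-1}\}^*$. There exist constants $C_1,C_2,D_1,D_2>0$ such that for every $x\in G$ with this normal form $x=w(a,t)a^N$, $$C_1\bigl(|w|+\log(|N|+1)\bigr)-D_1\leq \|x\|\leq C_2\bigl(|w|+\log(|N|+1)\bigr)+D_2,$$ where $|w|$ is the number of letters of $w$ as a word over $\{a^{\pm1},t^{\pm1}\}$ and $\|x\|$ is the word length of $x$ with respect to the generating set $\{a,t\}$.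
   Context: $X^*$ denotes the set of finite concatenations of words from $X$. The base of the logarithm is any fixed base greater than $1$. *)

theory Defs
  imports Complex_Main
begin

datatype letter = La | LaInv | Lt | LtInv

fun inv_letter :: "letter \<Rightarrow> letter" where
  "inv_letter La = LaInv"
| "inv_letter LaInv = La"
| "inv_letter Lt = LtInv"
| "inv_letter LtInv = Lt"

type_synonym word = "letter list"

definition bs_rules :: "nat \<Rightarrow> nat \<Rightarrow> (word \<times> word) set" where
  "bs_rules p q = {([g, inv_letter g], []) | g. True}
     \<union> {([Lt] @ replicate p La @ [LtInv], replicate q La)}"

definition bs_step :: "nat \<Rightarrow> nat \<Rightarrow> word \<Rightarrow> word \<Rightarrow> bool" where
  "bs_step p q u v \<longleftrightarrow> (\<exists>x y l r. (l, r) \<in> bs_rules p q \<and> u = x @ l @ y \<and> v = x @ r @ y)"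

definition bs_eq :: "nat \<Rightarrow> nat \<Rightarrow> word \<Rightarrow> word \<Rightarrow> bool" where
  "bs_eq p q = equivclp (bs_step p q)"

definition bs_norm :: "nat \<Rightarrow> nat \<Rightarrow> word \<Rightarrow> nat" where
  "bs_norm p q u = (LEAST n. \<exists>v. length v = n \<and> bs_eq p q u v)"

definition apow :: "int \<Rightarrow> word" where
  "apow N = (if N \<ge> 0 then replicate (nat N) La else replicate (nat (- N)) LaInv)"

text \<open>A block a^k t (0 \<le> k < q) or a^k t^-1 (0 \<le> k < p); encoded as (k, True) / (k, False).\<close>

definition block_word :: "nat \<times> bool \<Rightarrow> word" where
  "block_word b = replicate (fst b) La @ [if snd b then Lt else LtInv]"

definition valid_block :: "nat \<Rightarrow> nat \<Rightarrow> nat \<times> bool \<Rightarrow> bool" where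
  "valid_block p q b \<longleftrightarrow> (if snd b then fst b < q else fst b < p)"

definition freely_reduced :: "word \<Rightarrow> bool" where
  "freely_reduced w \<longleftrightarrow> (\<forall>i. Suc i < length w \<longrightarrow> w ! Suc i \<noteq> inv_letter (w ! i))"

definition nf_word :: "nat \<Rightarrow> nat \<Rightarrow> word \<Rightarrow> bool" where
  "nf_word p q w \<longleftrightarrow> (\<exists>bs. (\<forall>b\<in>set bs. valid_block p q b) \<and> w = concat (map block_word bs))
                      \<and> freely_reduced w"

end

theory Submission
  imports Defs
begin

text \<open>
  A state (bs, N) stands for the word w a^N, where w is the concatenation of the blocks bs.
  The free monoid on the four letters acts on states from the right: a^{\<plusminus>1} shifts N, and
  t (resp. t^-1) divides N by q (resp. p) with remainder r, moves the quotient through the t-letter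
  using a^q t = t a^p, and either appends the block a^r t^{\<plusminus>1} or, when r = 0, cancels the t-letter
  against the last block. Every word is equivalent to the normal form of its state, and the action
  respects both defining relations, so the state is an invariant of the group element: this gives
  existence and uniqueness of the normal form.

  A single letter adds at most one block and multiplies |N| + 1 by at most p + q, so a word of
  length L has a normal form with |w| \<le> (p + q) L and log(|N| + 1) \<le> L log(p + q). Conversely
  a^n = t a^{(n div q) p} t^-1 a^{n mod q}, which replaces the exponent n by about n p / q at the cost
  of at most q + 1 letters; as p < q, iterating writes a^N with O(log |N|) letters.
\<close>

section \<open>Word equivalence\<close>

lemma bs_eq_refl [simp]: "bs_eq p q u u"
  by (simp add: bs_eq_def)

lemma bs_eq_sym [sym]: "bs_eq p q u v \<Longrightarrow> bs_eq p q v u"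
  by (simp add: bs_eq_def equivclp_sym)

lemma bs_eq_trans [trans]: "bs_eq p q u v \<Longrightarrow> bs_eq p q v w \<Longrightarrow> bs_eq p q u w"
  unfolding bs_eq_def by (rule equivclp_trans)

lemma bs_eq_rule: "(l, r) \<in> bs_rules p q \<Longrightarrow> bs_eq p q (x @ l @ y) (x @ r @ y)"
  unfolding bs_eq_def bs_step_def by blast

lemma bs_eq_cancel: "bs_eq p q (x @ [g, inv_letter g] @ y) (x @ y)"
  using bs_eq_rule[of "[g, inv_letter g]" "[]"] by (simp add: bs_rules_def)

lemma bs_eq_relator: "bs_eq p q ([Lt] @ replicate p La @ [LtInv]) (replicate q La)"
  using bs_eq_rule[of _ _ p q "[]" "[]"] by (simp add: bs_rules_def)

lemma bs_step_in_context: "bs_step p q u v \<Longrightarrow> bs_step p q (x @ u @ y) (x @ v @ y)"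
  unfolding bs_step_def by (metis append.assoc)

lemma bs_eq_in_context: "bs_eq p q u v \<Longrightarrow> bs_eq p q (x @ u @ y) (x @ v @ y)"
  unfolding bs_eq_def
proof (induction rule: equivclp_induct)
  case (step v w)
  from step.hyps(2) have "bs_step p q (x @ v @ y) (x @ w @ y) \<or> bs_step p q (x @ w @ y) (x @ v @ y)"
    using bs_step_in_context by blast
  with step.IH show ?case by (rule equivclp_into_equivclp)
qed simp

lemma bs_eq_append:
  assumes "bs_eq p q u v" and "bs_eq p q u' v'"
  shows "bs_eq p q (u @ u') (v @ v')"
proof -
  have "bs_eq p q (u @ u') (v @ u')" using bs_eq_in_context[OF assms(1), of "[]" u'] by simp
  also have "bs_eq p q \<dots> (v @ v')" using bs_eq_in_context[OF assms(2), of v "[]"] by simp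
  finally show ?thesis .
qed

lemma bs_eq_append_left: "bs_eq p q u v \<Longrightarrow> bs_eq p q (x @ u) (x @ v)"
  by (rule bs_eq_append) simp_all

lemma bs_eq_append_right: "bs_eq p q u v \<Longrightarrow> bs_eq p q (u @ x) (v @ x)"
  by (rule bs_eq_append) simp_all

lemma bs_eq_invariant:
  assumes "\<And>u v. bs_step p q u v \<Longrightarrow> f u = f v" and "bs_eq p q u v"
  shows "f u = f v"
  using assms(2) unfolding bs_eq_def
proof (induction rule: equivclp_induct)
  case (step v w)
  from step.hyps(2) have "f v = f w" by (auto dest: assms(1))
  with step.IH show ?case by simp
qed simp

lemma bs_norm_le:
  assumes "bs_eq p q u v"
  shows "bs_norm p q u \<le> length v"
proof -
  have "\<exists>v'. length v' = length v \<and> bs_eq p q u v'" using assms by auto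
  then show ?thesis unfolding bs_norm_def by (rule Least_le)
qed

lemma bs_norm_attained: "\<exists>v. bs_eq p q u v \<and> length v = bs_norm p q u"
proof -
  have "\<exists>n v. length v = n \<and> bs_eq p q u v" by (blast intro: bs_eq_refl)
  from LeastI_ex[OF this] show ?thesis unfolding bs_norm_def by auto
qed

section \<open>Powers of a\<close>

lemma length_apow [simp]: "length (apow N) = nat \<bar>N\<bar>"
  by (simp add: apow_def)

lemma apow_of_nat: "apow (int n) = replicate n La"
  by (simp add: apow_def)

lemma apow_plus_one: "0 \<le> N \<Longrightarrow> apow (N + 1) = apow N @ [La]"
  by (simp add: apow_def nat_add_distrib replicate_append_same)

lemma apow_minus_one:
  assumes "N \<le> 0"
  shows "apow (N - 1) = apow N @ [LaInv]"
proof -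
  have "nat (- (N - 1)) = Suc (nat (- N))" using assms by simp
  then show ?thesis using assms by (simp add: apow_def replicate_append_same)
qed

lemma apow_snoc_La: "bs_eq p q (apow N @ [La]) (apow (N + 1))"
proof (cases "0 \<le> N")
  case False
  then have "apow N @ [La] = apow (N + 1) @ [LaInv, inv_letter LaInv] @ []"
    using apow_minus_one[of "N + 1"] by simp
  then show ?thesis using bs_eq_cancel[of p q "apow (N + 1)" LaInv "[]"] by simp
qed (simp add: apow_plus_one)

lemma apow_snoc_LaInv: "bs_eq p q (apow N @ [LaInv]) (apow (N - 1))"
proof (cases "N \<le> 0")
  case False
  then have "apow N @ [LaInv] = apow (N - 1) @ [La, inv_letter La] @ []"
    using apow_plus_one[of "N - 1"] by simp
  then show ?thesis using bs_eq_cancel[of p q "apow (N - 1)" La "[]"] by simp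
qed (simp add: apow_minus_one)

lemma apow_add: "bs_eq p q (apow M @ apow N) (apow (M + N))"
proof (induction N rule: int_induct[where k = 0])
  case (step1 i)
  have "apow M @ apow (i + 1) = (apow M @ apow i) @ [La]"
    using step1(1) by (simp add: apow_plus_one)
  also have "bs_eq p q \<dots> (apow (M + i) @ [La])"
    using step1(2) by (rule bs_eq_append_right)
  also have "bs_eq p q \<dots> (apow (M + (i + 1)))"
    using apow_snoc_La[of p q "M + i"] by (simp add: add.assoc)
  finally show ?case .
next
  case (step2 i)
  have "apow M @ apow (i - 1) = (apow M @ apow i) @ [LaInv]"
    using step2(1) by (simp add: apow_minus_one)
  also have "bs_eq p q \<dots> (apow (M + i) @ [LaInv])"
    using step2(2) by (rule bs_eq_append_right)
  also have "bs_eq p q \<dots> (apow (M + (i - 1)))"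
    using apow_snoc_LaInv[of p q "M + i"] by (simp add: algebra_simps)
  finally show ?case .
qed (simp add: apow_def)

lemma apow_commute_add:
  assumes "bs_eq p q (apow m @ [x]) ([x] @ apow n)"
    and "bs_eq p q (apow m' @ [x]) ([x] @ apow n')"
  shows "bs_eq p q (apow (m + m') @ [x]) ([x] @ apow (n + n'))"
proof -
  have "bs_eq p q (apow (m + m') @ [x]) (apow m @ apow m' @ [x])"
    using bs_eq_append_right[OF bs_eq_sym[OF apow_add], of p q m m' "[x]"] by simp
  also have "bs_eq p q \<dots> (apow m @ [x] @ apow n')"
    by (rule bs_eq_append_left[OF assms(2)])
  also have "bs_eq p q \<dots> ([x] @ apow n @ apow n')"
    using bs_eq_append_right[OF assms(1), of "apow n'"] by simp
  also have "bs_eq p q \<dots> ([x] @ apow (n + n'))"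
    by (rule bs_eq_append_left[OF apow_add])
  finally show ?thesis .
qed

lemma apow_commute_uminus:
  assumes comm: "bs_eq p q (apow m @ [x]) ([x] @ apow n)"
  shows "bs_eq p q (apow (- m) @ [x]) ([x] @ apow (- n))"
proof -
  \<comment> \<open>multiply the hypothesis by a^{-m} on the left and by a^{-n} on the right\<close>
  have "apow (- m) @ [x] = (apow (- m) @ [x]) @ apow (n + - n)"
    by (simp add: apow_def)
  also have "bs_eq p q \<dots> ((apow (- m) @ [x]) @ apow n @ apow (- n))"
    by (rule bs_eq_append_left[OF bs_eq_sym[OF apow_add]])
  also have "\<dots> = apow (- m) @ ([x] @ apow n) @ apow (- n)" by simp
  also have "bs_eq p q \<dots> (apow (- m) @ (apow m @ [x]) @ apow (- n))"
    by (rule bs_eq_in_context[OF bs_eq_sym[OF comm]])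
  also have "\<dots> = (apow (- m) @ apow m) @ [x] @ apow (- n)" by simp
  also have "bs_eq p q \<dots> (apow (- m + m) @ [x] @ apow (- n))"
    by (rule bs_eq_append_right[OF apow_add])
  finally show ?thesis by (simp add: apow_def)
qed

lemma apow_commute_mult:
  assumes comm: "bs_eq p q (apow m @ [x]) ([x] @ apow n)"
  shows "bs_eq p q (apow (k * m) @ [x]) ([x] @ apow (k * n))"
proof (induction k rule: int_induct[where k = 0])
  case (step1 i)
  from apow_commute_add[OF comm step1(2)] show ?case by (simp add: algebra_simps)
next
  case (step2 i)
  from apow_commute_add[OF apow_commute_uminus[OF comm] step2(2)] show ?case
    by (simp add: algebra_simps)
qed (simp add: apow_def)

section \<open>Normal forms\<close>

definition t_letter :: "bool \<Rightarrow> letter" where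
  "t_letter d = (if d then Lt else LtInv)"

definition modulus :: "nat \<Rightarrow> nat \<Rightarrow> bool \<Rightarrow> int" where
  "modulus p q d = (if d then int q else int p)"

lemma inv_t_letter [simp]: "inv_letter (t_letter d) = t_letter (\<not> d)"
  by (simp add: t_letter_def)

lemma block_word_t_letter: "block_word b = replicate (fst b) La @ [t_letter (snd b)]"
  by (simp add: block_word_def t_letter_def)

lemma valid_block_modulus: "valid_block p q b \<longleftrightarrow> int (fst b) < modulus p q (snd b)"
  by (simp add: valid_block_def modulus_def)

lemma apow_commute_t_letter:
  "bs_eq p q (apow (k * modulus p q d) @ [t_letter d]) ([t_letter d] @ apow (k * modulus p q (\<not> d)))"
proof (rule apow_commute_mult)
  show "bs_eq p q (apow (modulus p q d) @ [t_letter d]) ([t_letter d] @ apow (modulus p q (\<not> d)))"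
  proof (cases d)
    case True
    have "apow (int q) @ [Lt] = replicate q La @ [Lt]" by (simp add: apow_of_nat)
    also have "bs_eq p q \<dots> (([Lt] @ replicate p La @ [LtInv]) @ [Lt])"
      by (rule bs_eq_append_right[OF bs_eq_sym[OF bs_eq_relator]])
    also have "\<dots> = ([Lt] @ replicate p La) @ [LtInv, inv_letter LtInv] @ []" by simp
    also have "bs_eq p q \<dots> ([Lt] @ apow (int p))"
      using bs_eq_cancel[of p q "[Lt] @ replicate p La" LtInv "[]"] by (simp add: apow_of_nat)
    finally show ?thesis using True by (simp add: modulus_def t_letter_def)
  next
    case False
    have "apow (int p) @ [LtInv] = [] @ replicate p La @ [LtInv]" by (simp add: apow_of_nat)
    also have "bs_eq p q \<dots> ([] @ [LtInv, inv_letter LtInv] @ replicate p La @ [LtInv])"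
      by (rule bs_eq_sym[OF bs_eq_cancel])
    also have "\<dots> = [LtInv] @ ([Lt] @ replicate p La @ [LtInv]) @ []" by simp
    also have "bs_eq p q \<dots> ([LtInv] @ replicate q La @ [])"
      by (rule bs_eq_in_context[OF bs_eq_relator])
    finally show ?thesis using False by (simp add: modulus_def t_letter_def apow_of_nat)
  qed
qed


type_synonym state = "(nat \<times> bool) list \<times> int"

definition blocks_word :: "(nat \<times> bool) list \<Rightarrow> word" where
  "blocks_word bs = concat (map block_word bs)"

definition state_word :: "state \<Rightarrow> word" where
  "state_word s = blocks_word (fst s) @ apow (snd s)"

definition reduced_junction :: "nat \<times> bool \<Rightarrow> nat \<times> bool \<Rightarrow> bool" where
  "reduced_junction b c \<longleftrightarrow> snd b = snd c \<or> fst c \<noteq> 0"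

definition valid_blocks :: "nat \<Rightarrow> nat \<Rightarrow> (nat \<times> bool) list \<Rightarrow> bool" where
  "valid_blocks p q bs \<longleftrightarrow>
     (\<forall>b\<in>set bs. valid_block p q b) \<and> successively reduced_junction bs"

lemma blocks_word_simps [simp]:
  "blocks_word [] = []"
  "blocks_word (bs @ cs) = blocks_word bs @ blocks_word cs"
  "blocks_word [b] = block_word b"
  by (simp_all add: blocks_word_def)

lemma valid_blocks_Nil [simp]: "valid_blocks p q []"
  by (simp add: valid_blocks_def)

lemma valid_blocks_snoc:
  "valid_blocks p q (bs @ [b]) \<longleftrightarrow>
     valid_blocks p q bs \<and> valid_block p q b \<and> (bs = [] \<or> reduced_junction (last bs) b)"
  by (auto simp: valid_blocks_def successively_append_iff)

lemma freely_reduced_iff_successively: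
  "freely_reduced w \<longleftrightarrow> successively (\<lambda>x y. y \<noteq> inv_letter x) w"
  unfolding freely_reduced_def successively_conv_nth by blast

lemma freely_reduced_block_word: "freely_reduced (block_word b)"
  unfolding freely_reduced_def block_word_t_letter
  by (auto simp: nth_append t_letter_def less_Suc_eq)

lemma freely_reduced_blocks_word:
  "freely_reduced (blocks_word bs) \<longleftrightarrow> successively reduced_junction bs"
proof (induction bs rule: rev_induct)
  case (snoc b bs)
  have "hd (block_word b) \<noteq> inv_letter (last (blocks_word bs)) \<longleftrightarrow> reduced_junction (last bs) b"
    if "bs \<noteq> []"
  proof -
    have "last (blocks_word bs) = t_letter (snd (last bs))"
      using that by (induction bs rule: rev_induct) (auto simp: block_word_t_letter)
    then show ?thesis
      by (cases "fst b") (auto simp: block_word_t_letter t_letter_def reduced_junction_def)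
  qed
  moreover have "blocks_word bs = [] \<longleftrightarrow> bs = []"
    by (induction bs) (auto simp: blocks_word_def block_word_def)
  ultimately show ?case
    using snoc.IH freely_reduced_block_word[of b]
    by (auto simp: freely_reduced_iff_successively successively_append_iff block_word_def)
qed (simp add: freely_reduced_def)

lemma nf_word_iff_valid_blocks:
  "nf_word p q w \<longleftrightarrow> (\<exists>bs. valid_blocks p q bs \<and> w = blocks_word bs)"
  unfolding nf_word_def valid_blocks_def blocks_word_def[symmetric]
  using freely_reduced_blocks_word by blast


locale bs_group =
  fixes p q :: nat
  assumes p_pos: "0 < p" and q_pos: "0 < q"
begin

lemma modulus_pos: "0 < modulus p q d"
  using p_pos q_pos by (simp add: modulus_def)

text \<open>Right multiplication by t (d = True) or t^-1 (d = False): with N = j m + r, where m is the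
  modulus of d and n that of \<not> d, we have a^N t_d = a^r t_d a^{j n}.\<close>

fun t_act :: "bool \<Rightarrow> state \<Rightarrow> state" where
  "t_act d (bs, N) =
     (if N mod modulus p q d = 0 \<and> bs \<noteq> [] \<and> snd (last bs) \<noteq> d
      then (butlast bs, int (fst (last bs)) + N div modulus p q d * modulus p q (\<not> d))
      else (bs @ [(nat (N mod modulus p q d), d)], N div modulus p q d * modulus p q (\<not> d)))"

declare t_act.simps [simp del]

fun act :: "letter \<Rightarrow> state \<Rightarrow> state" where
  "act La (bs, N) = (bs, N + 1)"
| "act LaInv (bs, N) = (bs, N - 1)"
| "act Lt s = t_act True s"
| "act LtInv s = t_act False s"

definition state_of :: "word \<Rightarrow> state" where
  "state_of u = fold act u ([], 0)"

lemma t_act_sound: "bs_eq p q (state_word s @ [t_letter d]) (state_word (t_act d s))"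
proof -
  obtain bs N where s: "s = (bs, N)" by (cases s)
  define m n where "m = modulus p q d" and "n = modulus p q (\<not> d)"
  define r j where "r = N mod m" and "j = N div m"
  have "apow N @ [t_letter d] = apow (r + j * m) @ [t_letter d]"
    by (simp add: r_def j_def)
  also have "bs_eq p q \<dots> (apow r @ apow (j * m) @ [t_letter d])"
    using bs_eq_append_right[OF bs_eq_sym[OF apow_add], of p q r "j * m" "[t_letter d]"] by simp
  also have "bs_eq p q \<dots> (apow r @ [t_letter d] @ apow (j * n))"
    unfolding m_def n_def by (rule bs_eq_append_left[OF apow_commute_t_letter])
  finally have "bs_eq p q (blocks_word bs @ apow N @ [t_letter d])
      (blocks_word bs @ apow r @ [t_letter d] @ apow (j * n))"
    by (rule bs_eq_append_left)
  then have split: "bs_eq p q (state_word s @ [t_letter d])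
      (blocks_word bs @ apow r @ [t_letter d] @ apow (j * n))"
    by (simp add: s state_word_def)
  show ?thesis
  proof (cases "r = 0 \<and> bs \<noteq> [] \<and> snd (last bs) \<noteq> d")
    case True
    then obtain bs' b where "bs = bs' @ [b]" by (cases bs rule: rev_exhaust) auto
    with True obtain k where bs: "bs = bs' @ [(k, \<not> d)]" by (cases b) auto
    have "blocks_word bs @ apow r @ [t_letter d] @ apow (j * n)
        = (blocks_word bs' @ apow (int k))
            @ [t_letter (\<not> d), inv_letter (t_letter (\<not> d))] @ apow (j * n)"
      using True bs by (simp add: block_word_t_letter apow_of_nat apow_def)
    also have "bs_eq p q \<dots> ((blocks_word bs' @ apow (int k)) @ apow (j * n))"
      by (rule bs_eq_cancel)
    also have "bs_eq p q \<dots> (blocks_word bs' @ apow (int k + j * n))"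
      using bs_eq_append_left[OF apow_add] by simp
    also have "\<dots> = state_word (t_act d s)"
      using True bs s by (simp add: t_act.simps state_word_def r_def j_def m_def n_def)
    finally show ?thesis using split by (rule bs_eq_trans[rotated])
  next
    case False
    have "apow r = replicate (nat r) La"
      using modulus_pos[of d] by (simp add: apow_def r_def m_def)
    moreover have "t_act d s = (bs @ [(nat r, d)], j * n)"
      using False by (simp only: s t_act.simps r_def j_def m_def n_def if_False simp_thms)
    ultimately have "blocks_word bs @ apow r @ [t_letter d] @ apow (j * n) = state_word (t_act d s)"
      by (simp add: state_word_def block_word_t_letter)
    then show ?thesis using split by simp
  qed
qed

lemma t_act_valid:
  assumes "valid_blocks p q bs"
  shows "valid_blocks p q (fst (t_act d (bs, N)))"
proof (cases "N mod modulus p q d = 0 \<and> bs \<noteq> [] \<and> snd (last bs) \<noteq> d")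
  case True
  then have "bs = butlast bs @ [last bs]" by simp
  then show ?thesis using assms True valid_blocks_snoc by (metis fst_conv t_act.simps)
next
  case False
  have "0 \<le> N mod modulus p q d" "N mod modulus p q d < modulus p q d"
    using modulus_pos[of d] by simp_all
  then show ?thesis
    using assms False
    by (auto simp: t_act.simps valid_blocks_snoc valid_block_modulus reduced_junction_def)
qed

lemma t_act_inverse:
  assumes valid: "valid_blocks p q bs"
  shows "t_act (\<not> d) (t_act d (bs, N)) = (bs, N)"
proof -
  define m n where "m = modulus p q d" and "n = modulus p q (\<not> d)"
  define r j where "r = N mod m" and "j = N div m"
  have N: "N = r + j * m" by (simp add: r_def j_def)
  have "0 < m" "0 < n" using modulus_pos by (simp_all add: m_def n_def)
  show ?thesis
  proof (cases "r = 0 \<and> bs \<noteq> [] \<and> snd (last bs) \<noteq> d")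
    case True
    then obtain bs' b where "bs = bs' @ [b]" by (cases bs rule: rev_exhaust) auto
    with True obtain k where bs: "bs = bs' @ [(k, \<not> d)]" by (cases b) auto
    from valid have k: "int k < n" and junction: "bs' = [] \<or> reduced_junction (last bs') (k, \<not> d)"
      by (simp_all add: bs valid_blocks_snoc valid_block_modulus n_def)
    have "t_act d (bs, N) = (bs', int k + j * n)"
      using True by (simp add: t_act.simps bs r_def j_def m_def n_def)
    moreover have "(int k + j * n) mod n = int k" "(int k + j * n) div n = j"
      using k \<open>0 < n\<close> by simp_all
    ultimately show ?thesis
      using True junction N
      by (auto simp: t_act.simps bs reduced_junction_def m_def n_def)
  next
    case False
    then have "t_act d (bs, N) = (bs @ [(nat r, d)], j * n)"
      by (simp only: t_act.simps r_def j_def m_def n_def if_False simp_thms)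
    moreover have "r \<ge> 0" using \<open>0 < m\<close> by (simp add: r_def)
    ultimately show ?thesis
      using \<open>0 < n\<close> N by (simp add: t_act.simps m_def n_def)
  qed
qed

lemma t_act_shift:
  "t_act d (bs, N + modulus p q d) = apsnd (\<lambda>M. M + modulus p q (\<not> d)) (t_act d (bs, N))"
  using modulus_pos[of d] by (simp add: t_act.simps algebra_simps)

lemma act_valid: "valid_blocks p q (fst s) \<Longrightarrow> valid_blocks p q (fst (act g s))"
  by (cases g; cases s) (simp_all add: t_act_valid)

lemma fold_act_valid: "valid_blocks p q (fst s) \<Longrightarrow> valid_blocks p q (fst (fold act u s))"
  by (induction u arbitrary: s) (simp_all add: act_valid)

lemma valid_state_of: "valid_blocks p q (fst (state_of u))"
  unfolding state_of_def by (rule fold_act_valid) simp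

lemma fold_act_replicate_La: "fold act (replicate k La) (bs, N) = (bs, N + int k)"
  by (induction k arbitrary: N) (simp_all add: algebra_simps del: fold_replicate)

lemma fold_act_apow: "fold act (apow M) (bs, N) = (bs, N + M)"
proof -
  have "fold act (replicate k LaInv) (bs, N) = (bs, N - int k)" for k N
    by (induction k arbitrary: N) (simp_all add: algebra_simps del: fold_replicate)
  then show ?thesis by (simp add: apow_def fold_act_replicate_La del: fold_replicate)
qed

lemma act_inverse: "valid_blocks p q bs \<Longrightarrow> act (inv_letter g) (act g (bs, N)) = (bs, N)"
  using t_act_inverse[of bs True N] t_act_inverse[of bs False N] by (cases g) simp_all

text \<open>A shift of N by q passes through the t-step as a shift by p, which the t^-1-step absorbs;
  so the relator acts as t^-1 after t, i.e.\ trivially.\<close>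

lemma act_relator:
  assumes "valid_blocks p q bs"
  shows "fold act ([Lt] @ replicate p La @ [LtInv]) (bs, N) = fold act (replicate q La) (bs, N)"
proof -
  have "fold act ([Lt] @ replicate p La @ [LtInv]) (bs, N)
      = t_act False (apsnd (\<lambda>M. M + int p) (t_act True (bs, N)))"
    by (cases "t_act True (bs, N)") (simp add: fold_act_replicate_La del: fold_replicate)
  also have "\<dots> = t_act False (t_act True (bs, N + int q))"
    using t_act_shift[of True bs N] by (simp add: modulus_def)
  also have "\<dots> = (bs, N + int q)"
    using t_act_inverse[OF assms, of True] by simp
  finally show ?thesis by (simp add: fold_act_replicate_La del: fold_replicate)
qed

lemma state_of_bs_eq:
  assumes "bs_eq p q u v"
  shows "state_of u = state_of v"
  using assms
proof (rule bs_eq_invariant[rotated])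
  fix u v assume "bs_step p q u v"
  then obtain x y l r where lr: "(l, r) \<in> bs_rules p q" and uv: "u = x @ l @ y" "v = x @ r @ y"
    unfolding bs_step_def by blast
  obtain bs N where x: "state_of x = (bs, N)" by (cases "state_of x")
  have "valid_blocks p q bs" using valid_state_of[of x] x by simp
  then have "fold act l (bs, N) = fold act r (bs, N)"
    using lr act_inverse act_relator by (auto simp: bs_rules_def)
  then show "state_of u = state_of v"
    using x uv by (simp add: state_of_def)
qed

lemma act_sound: "bs_eq p q (state_word s @ [g]) (state_word (act g s))"
proof (cases g)
  case La
  obtain bs N where "s = (bs, N)" by (cases s)
  with La show ?thesis using bs_eq_append_left[OF apow_snoc_La] by (simp add: state_word_def)
next
  case LaInv
  obtain bs N where "s = (bs, N)" by (cases s)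
  with LaInv show ?thesis using bs_eq_append_left[OF apow_snoc_LaInv] by (simp add: state_word_def)
next
  case Lt
  with t_act_sound[of s True] show ?thesis by (simp add: t_letter_def)
next
  case LtInv
  with t_act_sound[of s False] show ?thesis by (simp add: t_letter_def)
qed

lemma bs_eq_state_word_state_of: "bs_eq p q u (state_word (state_of u))"
proof (induction u rule: rev_induct)
  case (snoc g u)
  have "bs_eq p q (u @ [g]) (state_word (state_of u) @ [g])"
    by (rule bs_eq_append_right[OF snoc.IH])
  also have "bs_eq p q \<dots> (state_word (state_of (u @ [g])))"
    using act_sound by (simp add: state_of_def)
  finally show ?case .
qed (simp add: state_word_def state_of_def apow_def)

lemma state_of_state_word:
  assumes "valid_blocks p q bs"
  shows "state_of (state_word (bs, N)) = (bs, N)"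
proof -
  have "fold act (blocks_word bs) ([], 0) = (bs, 0)"
    using assms
  proof (induction bs rule: rev_induct)
    case (snoc b bs)
    obtain k d where b: "b = (k, d)" by (cases b)
    have "int k < modulus p q d" and "bs = [] \<or> reduced_junction (last bs) (k, d)"
      using snoc.prems by (simp_all add: b valid_blocks_snoc valid_block_modulus)
    then have "t_act d (bs, int k) = (bs @ [(k, d)], 0)"
      by (auto simp: t_act.simps reduced_junction_def)
    then show ?case
      using snoc by (cases d) (simp_all add: b valid_blocks_snoc block_word_t_letter
          fold_act_replicate_La t_letter_def del: fold_replicate)
  qed simp
  then show ?thesis by (simp add: state_of_def state_word_def fold_act_apow)
qed

lemma normal_form_unique: "\<exists>!(w, N). nf_word p q w \<and> bs_eq p q u (w @ apow N)"
proof -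
  obtain bs N where u: "state_of u = (bs, N)" by (cases "state_of u")
  have valid: "valid_blocks p q bs" using valid_state_of[of u] u by simp
  show ?thesis
  proof (rule ex1I[of _ "(blocks_word bs, N)"])
    show "case (blocks_word bs, N) of (w, N) \<Rightarrow> nf_word p q w \<and> bs_eq p q u (w @ apow N)"
      using valid bs_eq_state_word_state_of[of u]
      by (auto simp: u nf_word_iff_valid_blocks state_word_def)
  next
    fix x assume "case x of (w, N) \<Rightarrow> nf_word p q w \<and> bs_eq p q u (w @ apow N)"
    then obtain bs' N' where x: "x = (blocks_word bs', N')" and "valid_blocks p q bs'"
      and "bs_eq p q u (state_word (bs', N'))"
      by (auto simp: nf_word_iff_valid_blocks state_word_def)
    then have "(bs', N') = (bs, N)"
      using state_of_bs_eq state_of_state_word u by metis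
    then show "x = (blocks_word bs, N)" using x by simp
  qed
qed

section \<open>Word length\<close>

lemma t_act_growth:
  assumes "valid_blocks p q bs"
  shows "length (fst (t_act d (bs, N))) \<le> Suc (length bs)"
    and "\<bar>snd (t_act d (bs, N))\<bar> + 1 \<le> modulus p q (\<not> d) * (\<bar>N\<bar> + 1)"
proof -
  define m n where "m = modulus p q d" and "n = modulus p q (\<not> d)"
  have "0 < m" "0 < n" using modulus_pos by (simp_all add: m_def n_def)
  have "\<bar>N div m\<bar> \<le> \<bar>N\<bar>"
    using \<open>0 < m\<close> by (smt (verit) div_by_1 pos_imp_zdiv_neg_iff zdiv_mono2 zdiv_mono2_neg)
  then have quotient: "\<bar>N div m * n\<bar> \<le> \<bar>N\<bar> * n"
    using \<open>0 < n\<close> by (simp add: abs_mult mult_right_mono)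
  show "length (fst (t_act d (bs, N))) \<le> Suc (length bs)"
    by (auto simp: t_act.simps)
  show "\<bar>snd (t_act d (bs, N))\<bar> + 1 \<le> n * (\<bar>N\<bar> + 1)"
  proof (cases "N mod m = 0 \<and> bs \<noteq> [] \<and> snd (last bs) \<noteq> d")
    case True
    then obtain bs' b where "bs = bs' @ [b]" by (cases bs rule: rev_exhaust) auto
    with True obtain k where bs: "bs = bs' @ [(k, \<not> d)]" by (cases b) auto
    have "int k < n" using assms by (simp add: bs valid_blocks_snoc valid_block_modulus n_def)
    with True quotient show ?thesis
      by (simp add: t_act.simps bs m_def n_def algebra_simps)
  next
    case False
    then have "snd (t_act d (bs, N)) = N div m * n"
      by (simp only: t_act.simps m_def n_def if_False simp_thms snd_conv)
    with quotient \<open>0 < n\<close> show ?thesis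
      by (simp add: distrib_left mult.commute)
  qed
qed

lemma act_growth:
  assumes "valid_blocks p q bs"
  shows "length (fst (act g (bs, N))) \<le> Suc (length bs)"
    and "\<bar>snd (act g (bs, N))\<bar> + 1 \<le> int (p + q) * (\<bar>N\<bar> + 1)"
proof -
  have "modulus p q d \<le> int (p + q)" for d by (simp add: modulus_def)
  then have t: "\<bar>snd (t_act d (bs, N))\<bar> + 1 \<le> int (p + q) * (\<bar>N\<bar> + 1)" for d
    using t_act_growth(2)[OF assms, of d N] by (smt (verit) mult_right_mono)
  have "2 * (\<bar>N\<bar> + 1) \<le> int (p + q) * (\<bar>N\<bar> + 1)"
    using p_pos q_pos by (intro mult_right_mono) simp_all
  then show "\<bar>snd (act g (bs, N))\<bar> + 1 \<le> int (p + q) * (\<bar>N\<bar> + 1)"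
    using t by (cases g) auto
  show "length (fst (act g (bs, N))) \<le> Suc (length bs)"
    using t_act_growth(1)[OF assms] by (cases g) auto
qed

lemma state_of_growth:
  "length (fst (state_of v)) \<le> length v \<and> \<bar>snd (state_of v)\<bar> + 1 \<le> int (p + q) ^ length v"
proof (induction v rule: rev_induct)
  case (snoc g v)
  obtain bs N where v: "state_of v = (bs, N)" by (cases "state_of v")
  have valid: "valid_blocks p q bs" using valid_state_of[of v] v by simp
  have step: "state_of (v @ [g]) = act g (bs, N)" by (simp add: state_of_def v[unfolded state_of_def])
  have "int (p + q) * (\<bar>N\<bar> + 1) \<le> int (p + q) * int (p + q) ^ length v"
    using snoc.IH v by (intro mult_left_mono) simp_all
  then show ?case
    using snoc.IH act_growth[OF valid, of g N] by (simp add: step v)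
qed (simp add: state_of_def)

lemma length_blocks_word:
  assumes "valid_blocks p q bs"
  shows "length (blocks_word bs) \<le> (p + q) * length bs"
proof -
  have "length (block_word b) \<le> p + q" if "b \<in> set bs" for b
    using assms that by (auto simp: valid_blocks_def valid_block_def block_word_def split: if_splits)
  then show ?thesis
    unfolding blocks_word_def length_concat
    using sum_list_mono[of bs "\<lambda>b. length (block_word b)" "\<lambda>_. p + q"]
    by (simp add: sum_list_triv mult.commute o_def)
qed

lemma nf_length_le_bs_norm:
  assumes "nf_word p q w" and "bs_eq p q u (w @ apow N)"
  shows "real (length w) + ln (real_of_int \<bar>N\<bar> + 1)
         \<le> (real (p + q) + ln (real (p + q))) * real (bs_norm p q u)"
proof -
  obtain bs where valid: "valid_blocks p q bs" and w: "w = blocks_word bs"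
    using assms(1) nf_word_iff_valid_blocks by blast
  obtain v where v: "bs_eq p q u v" and L: "length v = bs_norm p q u"
    using bs_norm_attained by blast
  define L where "L = bs_norm p q u"
  have "bs_eq p q v (state_word (bs, N))"
    using bs_eq_trans[OF bs_eq_sym[OF v] assms(2)] by (simp add: w state_word_def)
  then have "state_of v = (bs, N)"
    using state_of_bs_eq state_of_state_word[OF valid] by simp
  then have "length bs \<le> L" and N_bound: "\<bar>N\<bar> + 1 \<le> int (p + q) ^ L"
    using state_of_growth[of v] by (simp_all add: L L_def)
  have "length w \<le> (p + q) * L"
    using length_blocks_word[OF valid] mult_le_mono2[OF \<open>length bs \<le> L\<close>, of "p + q"]
    unfolding w by (rule le_trans)
  moreover have "ln (real_of_int \<bar>N\<bar> + 1) \<le> L * ln (real (p + q))"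
  proof -
    have "real_of_int (\<bar>N\<bar> + 1) \<le> real_of_int (int (p + q) ^ L)"
      using N_bound by (simp only: of_int_le_iff)
    then have "real_of_int \<bar>N\<bar> + 1 \<le> real (p + q) ^ L" by simp
    then have "ln (real_of_int \<bar>N\<bar> + 1) \<le> ln (real (p + q) ^ L)"
      by (rule ln_mono) simp_all
    then show ?thesis using p_pos by (simp add: ln_realpow)
  qed
  ultimately show ?thesis
    unfolding L_def[symmetric] by (simp add: algebra_simps of_nat_mono flip: of_nat_mult)
qed

end

lemma apow_conjugate_t: "bs_eq p q (apow (k * int q + r)) ([Lt] @ apow (k * int p) @ [LtInv] @ apow r)"
proof -
  have "bs_eq p q (apow (k * int q + r)) (apow (k * int q) @ apow r)"
    by (rule bs_eq_sym[OF apow_add])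
  also have "bs_eq p q \<dots> (apow (k * int q) @ [Lt, inv_letter Lt] @ apow r)"
    by (rule bs_eq_sym[OF bs_eq_cancel])
  also have "\<dots> = (apow (k * int q) @ [Lt]) @ [LtInv] @ apow r" by simp
  also have "bs_eq p q \<dots> (([Lt] @ apow (k * int p)) @ [LtInv] @ apow r)"
    using bs_eq_append_right[OF apow_commute_t_letter[of p q k True]]
    by (simp add: modulus_def t_letter_def)
  finally show ?thesis by simp
qed

lemma ln_compression_step:
  fixes d n :: nat
  assumes "p < q" and "1 \<le> d" and "d * q \<le> n"
  shows "ln (real (d * p) + 1) + ln ((real q + 1) / (real p + 1)) \<le> ln (real n + 1)"
proof -
  obtain e where d: "d = Suc e" using assms(2) by (cases d) auto
  have "e * p \<le> e * q" using assms(1) by simp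
  then have "(d * p + 1) * (q + 1) \<le> (d * q + 1) * (p + 1)"
    by (simp add: d algebra_simps)
  also have "\<dots> \<le> (n + 1) * (p + 1)" using assms(3) by (intro mult_le_mono1) simp
  finally have "real ((d * p + 1) * (q + 1)) \<le> real ((n + 1) * (p + 1))"
    by (rule of_nat_mono)
  then have "(real (d * p) + 1) * (real q + 1) \<le> (real n + 1) * (real p + 1)"
    by (simp only: of_nat_mult of_nat_add of_nat_1)
  then have "(real (d * p) + 1) * ((real q + 1) / (real p + 1)) \<le> real n + 1"
    by (simp add: field_simps)
  moreover have "0 < (real (d * p) + 1) * ((real q + 1) / (real p + 1))"
    by (intro mult_pos_pos divide_pos_pos) linarith+
  ultimately have "ln ((real (d * p) + 1) * ((real q + 1) / (real p + 1))) \<le> ln (real n + 1)"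
    by (intro ln_mono)
  moreover have "ln ((real (d * p) + 1) * ((real q + 1) / (real p + 1)))
      = ln (real (d * p) + 1) + ln ((real q + 1) / (real p + 1))"
    by (intro ln_mult_pos divide_pos_pos) linarith+
  ultimately show ?thesis by simp
qed

lemma apow_short_word:
  assumes "p < q"
  shows "\<exists>K > 0. \<forall>N. \<exists>v. bs_eq p q (apow N) v
           \<and> real (length v) \<le> K * ln (real_of_int \<bar>N\<bar> + 1) + q"
proof -
  \<comment> \<open>the q + 1 letters spent per step are paid for by the gain ln((q+1)/(p+1))\<close>
  define c where "c = ln ((real q + 1) / (real p + 1))"
  define K where "K = (real q + 1) / c"
  have "0 < c" using assms by (simp add: c_def)
  then have "0 < K" and Kc: "K * c = real q + 1" by (simp_all add: K_def)
  have "\<exists>v. bs_eq p q (apow N) v \<and> real (length v) \<le> K * ln (real_of_int \<bar>N\<bar> + 1) + q"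
    for N
  proof (induction "nat \<bar>N\<bar>" arbitrary: N rule: less_induct)
    case less
    show ?case
    proof (cases "\<bar>N\<bar> < int q")
      case True
      then have "real (length (apow N)) \<le> q" by simp
      moreover have "0 \<le> K * ln (real_of_int \<bar>N\<bar> + 1)" using \<open>0 < K\<close> by simp
      ultimately show ?thesis by (intro exI[of _ "apow N"]) simp
    next
      case False
      define d r where "d = nat \<bar>N\<bar> div q" and "r = nat \<bar>N\<bar> mod q"
      have "0 < q" "q \<le> nat \<bar>N\<bar>" using False assms by linarith+
      then have "1 \<le> d" "r < q" "d * q + r = nat \<bar>N\<bar>"
        using div_le_mono[of q "nat \<bar>N\<bar>" q] by (simp_all add: d_def r_def)
      define s where "s = sgn N"
      have "\<bar>s\<bar> = 1" using False assms by (simp add: s_def abs_sgn_eq)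
      have "N = s * int (d * q + r)"
        using \<open>d * q + r = nat \<bar>N\<bar>\<close> by (simp add: s_def sgn_mult_abs)
      then have N: "N = (s * int d) * int q + s * int r" by (simp add: algebra_simps)
      have "nat \<bar>(s * int d) * int p\<bar> = d * p"
        using \<open>\<bar>s\<bar> = 1\<close> by (simp add: abs_mult nat_mult_distrib)
      also have "\<dots> < d * q" using \<open>1 \<le> d\<close> assms by simp
      also have "\<dots> \<le> nat \<bar>N\<bar>" using \<open>d * q + r = nat \<bar>N\<bar>\<close> by simp
      finally have "nat \<bar>(s * int d) * int p\<bar> < nat \<bar>N\<bar>" .
      from less.hyps[OF this] obtain v where v: "bs_eq p q (apow ((s * int d) * int p)) v"
        and len_v: "real (length v) \<le> K * ln (real (d * p) + 1) + q"
        using \<open>\<bar>s\<bar> = 1\<close> by (auto simp: abs_mult)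
      have "bs_eq p q (apow N) ([Lt] @ apow ((s * int d) * int p) @ [LtInv] @ apow (s * int r))"
        unfolding N by (rule apow_conjugate_t)
      also have "bs_eq p q \<dots> ([Lt] @ v @ [LtInv] @ apow (s * int r))"
        by (rule bs_eq_in_context[OF v])
      finally have eq: "bs_eq p q (apow N) ([Lt] @ v @ [LtInv] @ apow (s * int r))" .
      have "real (length ([Lt] @ v @ [LtInv] @ apow (s * int r)))
          \<le> K * ln (real (d * p) + 1) + q + (real q + 1)"
        using len_v \<open>r < q\<close> \<open>\<bar>s\<bar> = 1\<close> by (simp add: abs_mult)
      also have "\<dots> = K * (ln (real (d * p) + 1) + c) + q"
        using Kc by (simp add: algebra_simps)
      also have "\<dots> \<le> K * ln (real_of_int \<bar>N\<bar> + 1) + q"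
        using ln_compression_step[OF assms \<open>1 \<le> d\<close>, of "nat \<bar>N\<bar>"]
          \<open>d * q + r = nat \<bar>N\<bar>\<close> \<open>0 < K\<close>
        by (simp add: c_def)
      finally show ?thesis using eq by blast
    qed
  qed
  with \<open>0 < K\<close> show ?thesis by blast
qed

lemma bs_norm_le_length_log:
  assumes "p < q"
  shows "\<exists>K > 0. \<forall>u w N. bs_eq p q u (w @ apow N) \<longrightarrow>
           real (bs_norm p q u) \<le> real (length w) + K * ln (real_of_int \<bar>N\<bar> + 1) + q"
proof -
  obtain K where "0 < K" and short:
    "\<And>N. \<exists>v. bs_eq p q (apow N) v \<and> real (length v) \<le> K * ln (real_of_int \<bar>N\<bar> + 1) + q"
    using apow_short_word[OF assms] by blast
  have "real (bs_norm p q u) \<le> real (length w) + K * ln (real_of_int \<bar>N\<bar> + 1) + q"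
    if "bs_eq p q u (w @ apow N)" for u w N
  proof -
    obtain v where v: "bs_eq p q (apow N) v" "real (length v) \<le> K * ln (real_of_int \<bar>N\<bar> + 1) + q"
      using short by blast
    have "bs_eq p q u (w @ v)" using bs_eq_trans[OF that bs_eq_append_left[OF v(1)]] .
    then have "bs_norm p q u \<le> length w + length v" using bs_norm_le by fastforce
    with v(2) show ?thesis by linarith
  qed
  with \<open>0 < K\<close> show ?thesis by blast
qed

theorem theorem3p2:
  fixes p q :: nat
  assumes "1 \<le> p" and "p < q"
  shows "(\<forall>u. \<exists>!(w, N). nf_word p q w \<and> bs_eq p q u (w @ apow N))
       \<and> (\<exists>C1 C2 D1 D2 :: real. C1 > 0 \<and> C2 > 0 \<and> D1 > 0 \<and> D2 > 0 \<and>
            (\<forall>u w N. nf_word p q w \<and> bs_eq p q u (w @ apow N) \<longrightarrow>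
               C1 * (real (length w) + ln (real_of_int \<bar>N\<bar> + 1)) - D1 \<le> real (bs_norm p q u)
             \<and> real (bs_norm p q u) \<le> C2 * (real (length w) + ln (real_of_int \<bar>N\<bar> + 1)) + D2))"
proof -
  interpret bs_group p q using assms by unfold_locales simp_all
  obtain K where "0 < K" and upper: "\<And>u w N. bs_eq p q u (w @ apow N) \<Longrightarrow>
      real (bs_norm p q u) \<le> real (length w) + K * ln (real_of_int \<bar>N\<bar> + 1) + q"
    using bs_norm_le_length_log[OF assms(2)] by blast
  define A where "A = real (p + q) + ln (real (p + q))"
  have "0 < A" using assms by (simp add: A_def add_pos_nonneg)
  have "(1 / A) * X - 1 \<le> real (bs_norm p q u) \<and> real (bs_norm p q u) \<le> max 1 K * X + q"
    if "nf_word p q w" "bs_eq p q u (w @ apow N)"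
      and X: "X = real (length w) + ln (real_of_int \<bar>N\<bar> + 1)" for u w N X
  proof
    have "X \<le> A * real (bs_norm p q u)"
      using nf_length_le_bs_norm[OF that(1,2)] by (simp add: X A_def)
    with \<open>0 < A\<close> show "(1 / A) * X - 1 \<le> real (bs_norm p q u)"
      by (simp add: field_simps)
    have "real (length w) + K * ln (real_of_int \<bar>N\<bar> + 1) \<le> max 1 K * X"
      unfolding X distrib_left by (intro add_mono mult_right_mono) (simp_all add: mult_le_cancel_right1)
    with upper[OF that(2)] show "real (bs_norm p q u) \<le> max 1 K * X + q" by linarith
  qed
  then show ?thesis
    using normal_form_unique \<open>0 < A\<close> \<open>0 < K\<close> assms
    by (intro conjI allI exI[of _ "1 / A"] exI[of _ "max 1 K"] exI[of _ 1] exI[of _ "real q"]) auto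
qed

end
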